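(* Let $n\ge 1$, let $\rho>0$ and let $d_1,\dots,d_n>0$. Let $W=(w_{ij})$ be the $n\times n$ matrix with $w_{ij}=1/d_{\min(i,j)}$, let $\mathbf 1\in\mathbb R^n$ be the column vector of ones, and set $M=W-\frac{1}{\rho}\mathbf 1\mathbf 1^T$. If $d_1\le d_2\le\cdots\le d_n$ and $d_1>\rho$, then $M$ is negative semidefinite.
   Context: Interpretation: $d_i$ is the density of the cargo placed in the $i$-th position from the bottom of a vessel and $\rho$ is the water density; the hypothesis says every cargo lies above cargoes of lower (or equal) density and the lowest cargo is heavier than water. *)

theory Defs
  imports Main "HOL.Real"
begin

text \<open>An n x n real matrix is represented as a function A :: nat => nat => real,
  indexed by i, j in {1..n}.\<close>

definition neg_semidef :: "nat \<Rightarrow> (nat \<Rightarrow> nat \<Rightarrow> real) \<Rightarrow> bool" where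
  "neg_semidef n A \<longleftrightarrow>
     (\<forall>i\<in>{1..n}. \<forall>j\<in>{1..n}. A i j = A j i) \<and>
     (\<forall>x :: nat \<Rightarrow> real. (\<Sum>i=1..n. \<Sum>j=1..n. x i * A i j * x j) \<le> 0)"

definition W_mat :: "(nat \<Rightarrow> real) \<Rightarrow> nat \<Rightarrow> nat \<Rightarrow> real" where
  "W_mat d i j = 1 / d (min i j)"

text \<open>M = W - (1/rho) 1 1^T; the matrix 1 1^T has all entries equal to 1.\<close>
definition M_mat :: "(nat \<Rightarrow> real) \<Rightarrow> real \<Rightarrow> nat \<Rightarrow> nat \<Rightarrow> real" where
  "M_mat d \<rho> i j = W_mat d i j - (1 / \<rho>) * 1 * 1"

end

theory Submission
  imports Defs
begin

text \<open>Writing \<open>a i = 1 / d i\<close> and \<open>c = 1 / \<rho>\<close>, the quadratic form of \<open>M\<close> is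
  \<open>\<Sum>i j. x i * (a (min i j) - c) * x j\<close> with \<open>a\<close> decreasing and \<open>a 1 \<le> c\<close>.
  Splitting \<open>a (min i j) - c = (a m - c) + (a (min i j) - a m)\<close> peels off the
  nonpositive term \<open>(a m - c) * (\<Sum>j. x j)\<^sup>2\<close>; the remainder vanishes on the row and
  column of index \<open>m\<close>, so it is a form of the same shape on \<open>{m+1..n}\<close> with \<open>c = a m\<close>,
  and induction finishes the proof.\<close>

lemma min_quadratic_form_peel:
  fixes a x :: "nat \<Rightarrow> real"
  assumes "m \<le> n"
  shows "(\<Sum>i=m..n. \<Sum>j=m..n. x i * (a (min i j) - c) * x j)
       = (a m - c) * (\<Sum>j=m..n. x j)\<^sup>2
         + (\<Sum>i=Suc m..n. \<Sum>j=Suc m..n. x i * (a (min i j) - a m) * x j)"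
proof -
  have split: "{m..n} = insert m {Suc m..n}" using assms by auto
  have "(\<Sum>i=m..n. \<Sum>j=m..n. x i * (a (min i j) - c) * x j)
      = (\<Sum>i=m..n. \<Sum>j=m..n. (a m - c) * (x i * x j) + x i * (a (min i j) - a m) * x j)"
    by (intro sum.cong refl) (simp add: algebra_simps)
  also have "\<dots> = (a m - c) * (\<Sum>j=m..n. x j)\<^sup>2
      + (\<Sum>i=m..n. \<Sum>j=m..n. x i * (a (min i j) - a m) * x j)"
    by (simp add: sum.distrib sum_distrib_left[symmetric] sum_product power2_eq_square)
  also have "(\<Sum>i=m..n. \<Sum>j=m..n. x i * (a (min i j) - a m) * x j)
      = (\<Sum>i=Suc m..n. \<Sum>j=Suc m..n. x i * (a (min i j) - a m) * x j)"
    unfolding split by (simp add: min_def)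
  finally show ?thesis .
qed

lemma min_quadratic_form_nonpos:
  fixes a x :: "nat \<Rightarrow> real"
  assumes "\<And>i j. m \<le> i \<Longrightarrow> i \<le> j \<Longrightarrow> j \<le> n \<Longrightarrow> a j \<le> a i"
    and "a m \<le> c"
  shows "(\<Sum>i=m..n. \<Sum>j=m..n. x i * (a (min i j) - c) * x j) \<le> 0"
  using assms
proof (induction "n - m" arbitrary: m c)
  case 0
  show ?case
  proof (cases "m \<le> n")
    case True
    with 0 have "n = m" by simp
    have "(a m - c) * (x m)\<^sup>2 \<le> 0"
      using "0.prems"(2) by (simp add: mult_nonpos_nonneg)
    with \<open>n = m\<close> show ?thesis by (simp add: power2_eq_square mult_ac)
  qed simp
next
  case (Suc k)
  then have "m \<le> n" by simp
  have rest: "(\<Sum>i=Suc m..n. \<Sum>j=Suc m..n. x i * (a (min i j) - a m) * x j) \<le> 0"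
  proof (cases "Suc m \<le> n")
    case True
    with Suc show ?thesis by (intro Suc.hyps) auto
  qed simp
  have "(a m - c) * (\<Sum>j=m..n. x j)\<^sup>2 \<le> 0"
    using Suc.prems(2) by (simp add: mult_nonpos_nonneg)
  with rest show ?case
    by (simp add: min_quadratic_form_peel[OF \<open>m \<le> n\<close>])
qed

theorem mainTheorem4:
  fixes n :: nat and \<rho> :: real and d :: "nat \<Rightarrow> real"
  assumes "n \<ge> 1"
    and "\<rho> > 0"
    and "\<forall>i\<in>{1..n}. d i > 0"
    and "\<forall>i\<in>{1..n}. \<forall>j\<in>{1..n}. i \<le> j \<longrightarrow> d i \<le> d j"
    and "d 1 > \<rho>"
  shows "neg_semidef n (M_mat d \<rho>)"
  unfolding neg_semidef_def
proof (intro conjI allI ballI)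
  fix i j
  show "M_mat d \<rho> i j = M_mat d \<rho> j i"
    by (simp add: M_mat_def W_mat_def min.commute)
next
  fix x :: "nat \<Rightarrow> real"
  have decreasing: "1 / d j \<le> 1 / d i" if "1 \<le> i" "i \<le> j" "j \<le> n" for i j
    using that assms(3,4) by (simp add: frac_le)
  have "1 / d 1 \<le> 1 / \<rho>"
    using assms(2,5) by (simp add: frac_le)
  from min_quadratic_form_nonpos[where a = "\<lambda>i. 1 / d i", OF decreasing this]
  show "(\<Sum>i=1..n. \<Sum>j=1..n. x i * M_mat d \<rho> i j * x j) \<le> 0"
    by (simp add: M_mat_def W_mat_def)
qed

end
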